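(* Let $\beta>1$. For all $x,y\in\mathbb R$, $\Theta_1(x,y)\ge\Theta_2(x,y)$.
   Context: For $\beta>1$ and real $x\ne y$ define $\Theta_1(x,y)=\Big(\frac1{2\beta-1}\frac{x|x|^{2(\beta-1)}-y|y|^{2(\beta-1)}}{x-y}\Big)^{\frac1{2(\beta-1)}}$ and $\Theta_2(x,y)=\Big(\frac1\beta\frac{x|x|^{\beta-1}-y|y|^{\beta-1}}{x-y}\Big)^{\frac1{\beta-1}}$ (the quotients are positive since both numerator maps are strictly increasing), and $\Theta_1(x,x)=\Theta_2(x,x)=0$. These are the absolute values of mean-value points for $t\mapsto t|t|^{2(\beta-1)}$ and $t\mapsto t|t|^{\beta-1}$ on $[x,y]$. *)

theory Defs
  imports "HOL-Analysis.Analysis"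
begin

definition Theta1 :: "real \<Rightarrow> real \<Rightarrow> real \<Rightarrow> real" where
  "Theta1 \<beta> x y = (if x = y then 0 else
     ((1 / (2*\<beta> - 1)) * ((x * \<bar>x\<bar> powr (2*(\<beta> - 1)) - y * \<bar>y\<bar> powr (2*(\<beta> - 1))) / (x - y)))
       powr (1 / (2*(\<beta> - 1))))"

definition Theta2 :: "real \<Rightarrow> real \<Rightarrow> real \<Rightarrow> real" where
  "Theta2 \<beta> x y = (if x = y then 0 else
     ((1 / \<beta>) * ((x * \<bar>x\<bar> powr (\<beta> - 1) - y * \<bar>y\<bar> powr (\<beta> - 1)) / (x - y)))
       powr (1 / (\<beta> - 1)))"

end

theory Submission
  imports Defs
begin

text \<open>Since \<open>t \<bar>t\<bar> powr a\<close> has derivative \<open>(a + 1) \<bar>t\<bar> powr a\<close>, the quotients inside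
  \<open>Theta1\<close> (with \<open>a = 2(\<beta> - 1)\<close>) and inside \<open>Theta2\<close> (with \<open>a = \<beta> - 1\<close>) are the means of
  \<open>g\<^sup>2\<close> and of \<open>g\<close> over the interval between \<open>x\<close> and \<open>y\<close>, where \<open>g t = \<bar>t\<bar> powr (\<beta> - 1)\<close>.
  The claim is therefore \<open>(mean g)\<^sup>2 \<le> mean g\<^sup>2\<close>, i.e. the nonnegativity of the variance, after
  taking \<open>2(\<beta> - 1)\<close>-th roots.\<close>

lemma signed_powr_has_real_derivative:
  fixes a t :: real
  assumes "a > 0" "t \<noteq> 0"
  shows "((\<lambda>t. t * \<bar>t\<bar> powr a) has_real_derivative (a + 1) * \<bar>t\<bar> powr a) (at t)"
proof (cases "t > 0")
  case True
  have "eventually (\<lambda>s. s \<in> {0<..}) (nhds t)"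
    using True by (intro eventually_nhds_in_open) auto
  then have ev: "eventually (\<lambda>s. s * \<bar>s\<bar> powr a = s powr (a + 1)) (nhds t)"
    by (rule eventually_mono) (auto simp: powr_add)
  have "((\<lambda>s. s powr (a + 1)) has_real_derivative (a + 1) * t powr a) (at t)"
    using True by (auto intro!: derivative_eq_intros)
  then show ?thesis
    using DERIV_cong_ev[OF refl ev refl] True by simp
next
  case False
  with assms have "t < 0" by simp
  then have "eventually (\<lambda>s. s \<in> {..<0}) (nhds t)"
    by (intro eventually_nhds_in_open) auto
  then have ev: "eventually (\<lambda>s. s * \<bar>s\<bar> powr a = - ((- s) powr (a + 1))) (nhds t)"
    by (rule eventually_mono) (auto simp: powr_add)
  have "((\<lambda>s. - ((- s) powr (a + 1))) has_real_derivative
          - ((a + 1) * (- t) powr (a + 1 - 1) * (- 1))) (at t)"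
    using \<open>t < 0\<close> by (auto intro!: derivative_eq_intros)
  then show ?thesis
    using DERIV_cong_ev[OF refl ev refl] \<open>t < 0\<close> by simp
qed

lemma abs_powr_has_integral:
  fixes a x y :: real
  assumes "a > 0" "x \<le> y"
  shows "((\<lambda>t. \<bar>t\<bar> powr a) has_integral (y * \<bar>y\<bar> powr a - x * \<bar>x\<bar> powr a) / (a + 1)) {x..y}"
proof -
  have "((\<lambda>t. (a + 1) * \<bar>t\<bar> powr a) has_integral y * \<bar>y\<bar> powr a - x * \<bar>x\<bar> powr a) {x..y}"
    by (rule fundamental_theorem_of_calculus_interior_strong[where S = "{0}"])
      (use assms in \<open>auto intro!: signed_powr_has_real_derivative continuous_intros
          continuous_on_powr' simp: has_real_derivative_iff_has_vector_derivative[symmetric]\<close>)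
  from has_integral_cmult_real[OF this, of "1 / (a + 1)"] show ?thesis
    using assms by simp
qed

lemma abs_powr_has_integral_mean_quotient:
  fixes a x y :: real
  assumes "a > 0" "x < y"
  shows "((\<lambda>t. \<bar>t\<bar> powr a) has_integral
           (y - x) * ((1 / (a + 1)) * ((x * \<bar>x\<bar> powr a - y * \<bar>y\<bar> powr a) / (x - y)))) {x..y}"
proof -
  have "(x * \<bar>x\<bar> powr a - y * \<bar>y\<bar> powr a) / (x - y)
          = (y * \<bar>y\<bar> powr a - x * \<bar>x\<bar> powr a) / (y - x)"
    by (metis minus_diff_eq minus_divide_divide)
  then have "(y - x) * ((1 / (a + 1)) * ((x * \<bar>x\<bar> powr a - y * \<bar>y\<bar> powr a) / (x - y)))
               = (y * \<bar>y\<bar> powr a - x * \<bar>x\<bar> powr a) / (a + 1)"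
    using assms by simp
  then show ?thesis
    using abs_powr_has_integral[OF assms(1) less_imp_le[OF assms(2)]] by simp
qed

lemma square_mean_le_mean_square:
  fixes f :: "real \<Rightarrow> real" and x y m M :: real
  assumes "x < y"
    and f: "(f has_integral (y - x) * m) {x..y}"
    and f2: "((\<lambda>t. (f t)\<^sup>2) has_integral (y - x) * M) {x..y}"
  shows "m\<^sup>2 \<le> M"
proof -
  have "((\<lambda>t. (f t)\<^sup>2 - 2 * m * f t + m\<^sup>2) has_integral
          (y - x) * M - 2 * m * ((y - x) * m) + m\<^sup>2 * (y - x)) {x..y}"
    using has_integral_add[OF has_integral_diff[OF f2 has_integral_cmult_real[OF f, of "2 * m"]]
        has_integral_const_real[of "m\<^sup>2" x y]] assms(1)
    by (simp add: mult.commute)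
  moreover have "(\<lambda>t. (f t)\<^sup>2 - 2 * m * f t + m\<^sup>2) = (\<lambda>t. (f t - m)\<^sup>2)"
    by (simp add: fun_eq_iff power2_diff)
  moreover have "(y - x) * M - 2 * m * ((y - x) * m) + m\<^sup>2 * (y - x) = (y - x) * (M - m\<^sup>2)"
    by (simp add: power2_eq_square algebra_simps)
  ultimately have "((\<lambda>t. (f t - m)\<^sup>2) has_integral (y - x) * (M - m\<^sup>2)) {x..y}"
    by simp
  then have "0 \<le> (y - x) * (M - m\<^sup>2)"
    by (rule has_integral_nonneg) simp
  with assms(1) show ?thesis
    by (simp add: zero_le_mult_iff)
qed

lemma powr_inverse_le_of_square_le:
  fixes m M q :: real
  assumes "q > 0" "m \<ge> 0" "m\<^sup>2 \<le> M"
  shows "m powr (1 / q) \<le> M powr (1 / (2 * q))"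
proof -
  have "m powr (1 / q) = (m powr 2) powr (1 / (2 * q))"
    using assms(1) by (simp add: powr_powr)
  also have "\<dots> = (m\<^sup>2) powr (1 / (2 * q))"
    using assms(2) by (simp add: powr_numeral)
  also have "\<dots> \<le> M powr (1 / (2 * q))"
    using assms by (intro powr_mono2) auto
  finally show ?thesis .
qed

lemma Theta2_le_Theta1_of_less:
  fixes \<beta> x y :: real
  assumes "\<beta> > 1" "x < y"
  shows "Theta2 \<beta> x y \<le> Theta1 \<beta> x y"
proof -
  define q where "q = \<beta> - 1"
  define m where "m = (1 / (q + 1)) * ((x * \<bar>x\<bar> powr q - y * \<bar>y\<bar> powr q) / (x - y))"
  define M where "M = (1 / (2 * q + 1)) * ((x * \<bar>x\<bar> powr (2 * q) - y * \<bar>y\<bar> powr (2 * q)) / (x - y))"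
  have "q > 0" and \<beta>: "\<beta> = q + 1"
    using assms(1) by (simp_all add: q_def)
  have Theta1: "Theta1 \<beta> x y = M powr (1 / (2 * q))"
    unfolding \<beta> Theta1_def M_def using assms(2) by (simp add: algebra_simps)
  have Theta2: "Theta2 \<beta> x y = m powr (1 / q)"
    unfolding \<beta> Theta2_def m_def using assms(2) by simp
  have f: "((\<lambda>t. \<bar>t\<bar> powr q) has_integral (y - x) * m) {x..y}"
    unfolding m_def using abs_powr_has_integral_mean_quotient[OF \<open>q > 0\<close> assms(2)] .
  have "((\<lambda>t. \<bar>t\<bar> powr (2 * q)) has_integral (y - x) * M) {x..y}"
    unfolding M_def using abs_powr_has_integral_mean_quotient[of "2 * q"] \<open>q > 0\<close> assms(2) by simp
  moreover have "\<bar>t\<bar> powr (2 * q) = (\<bar>t\<bar> powr q)\<^sup>2" for t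
    by (metis mult_2 powr_add power2_eq_square)
  ultimately have f2: "((\<lambda>t. (\<bar>t\<bar> powr q)\<^sup>2) has_integral (y - x) * M) {x..y}"
    by simp
  have "0 \<le> (y - x) * m"
    using has_integral_nonneg[OF f] by simp
  with assms(2) have "m \<ge> 0"
    by (simp add: zero_le_mult_iff)
  show ?thesis
    unfolding Theta1 Theta2
    using powr_inverse_le_of_square_le[OF \<open>q > 0\<close> \<open>m \<ge> 0\<close>]
      square_mean_le_mean_square[OF assms(2) f f2] .
qed

lemma Theta1_commute: "Theta1 \<beta> x y = Theta1 \<beta> y x"
  unfolding Theta1_def by (metis minus_diff_eq minus_divide_divide)

lemma Theta2_commute: "Theta2 \<beta> x y = Theta2 \<beta> y x"
  unfolding Theta2_def by (metis minus_diff_eq minus_divide_divide)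

theorem lemma4p4:
  fixes \<beta> x y :: real
  assumes "\<beta> > 1"
  shows "Theta1 \<beta> x y \<ge> Theta2 \<beta> x y"
proof (cases x y rule: linorder_cases)
  case less
  then show ?thesis using Theta2_le_Theta1_of_less[OF assms] by blast
next
  case equal
  then show ?thesis by (simp add: Theta1_def Theta2_def)
next
  case greater
  then show ?thesis
    using Theta2_le_Theta1_of_less[OF assms greater] by (simp add: Theta1_commute Theta2_commute)
qed

end
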